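(* Let $\mathcal R_Q$ be a nonempty set of rows that has the consecutive-ones property and whose overlap graph is connected, let $(c_1,\ldots,c_m)$ be a consecutive-ones ordering of $\mathcal R_Q$, and let $Z$ be a row not in $\mathcal R_Q$. Then $\mathcal R_Q\cup\{Z\}$ fails to have the consecutive-ones property if and only if one of the following holds: (1) there is a 1-0-1 configuration for $Z$; (2) there is a 0-1-0 configuration for $Z$ and $Z$ contains a column of the unconstrained Venn class of $\mathcal R_Q$.
   Context: Each row is identified with the set of columns in which it has a 1. A consecutive-ones ordering of a set of rows is an ordering of all columns in which each of these rows occupies consecutive columns; the set has the consecutive-ones property if one exists. Two rows overlap if they intersect and neither is a subset of the other; the overlap graph of a set of rows joins overlapping rows. Venn classes of $\mathcal R_Q$: two columns are in the same Venn class if they belong to exactly the same members of $\mathcal R_Q$; the unconstrained Venn class consists of the columns in no member of $\mathcal R_Q$, and all other Venn classes are constrained. A 1-0-1 configuration for $Z$ is a triple of columns $(c_h,c_i,c_j)$ with $h<i<j$ lying in three distinct constrained Venn classes of $\mathcal R_Q$ such that $c_h\in Z$, $c_i\notin Z$, $c_j\in Z$. A 0-1-0 configuration is defined identically except $c_h\notin Z$, $c_i\in Z$, $c_j\notin Z$. *)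

theory Defs
  imports Main
begin

text \<open>Columns are elements of a finite set C of type 'c; a row is identified with
the set of columns in which it has a 1 (a subset of C).\<close>

definition consecutive_in :: "'c list \<Rightarrow> 'c set \<Rightarrow> bool" where
  "consecutive_in cs r \<longleftrightarrow> (\<exists>a b. {k. k < length cs \<and> cs ! k \<in> r} = {a..<b})"

definition c1p_ordering :: "'c set \<Rightarrow> 'c set set \<Rightarrow> 'c list \<Rightarrow> bool" where
  "c1p_ordering C R cs \<longleftrightarrow> distinct cs \<and> set cs = C \<and> (\<forall>r\<in>R. consecutive_in cs r)"

definition has_c1p :: "'c set \<Rightarrow> 'c set set \<Rightarrow> bool" where
  "has_c1p C R \<longleftrightarrow> (\<exists>cs. c1p_ordering C R cs)"

definition overlaps :: "'c set \<Rightarrow> 'c set \<Rightarrow> bool" where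
  "overlaps r s \<longleftrightarrow> r \<inter> s \<noteq> {} \<and> \<not> r \<subseteq> s \<and> \<not> s \<subseteq> r"

definition overlap_graph :: "'c set set \<Rightarrow> ('c set \<times> 'c set) set" where
  "overlap_graph R = {(r, s). r \<in> R \<and> s \<in> R \<and> overlaps r s}"

definition overlap_connected :: "'c set set \<Rightarrow> bool" where
  "overlap_connected R \<longleftrightarrow> (\<forall>r\<in>R. \<forall>s\<in>R. (r, s) \<in> (overlap_graph R)\<^sup>*)"

definition same_venn :: "'c set set \<Rightarrow> 'c \<Rightarrow> 'c \<Rightarrow> bool" where
  "same_venn R c d \<longleftrightarrow> (\<forall>r\<in>R. c \<in> r \<longleftrightarrow> d \<in> r)"

definition constrained :: "'c set set \<Rightarrow> 'c \<Rightarrow> bool" where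
  "constrained R c \<longleftrightarrow> (\<exists>r\<in>R. c \<in> r)"

definition unconstrained_class :: "'c set \<Rightarrow> 'c set set \<Rightarrow> 'c set" where
  "unconstrained_class C R = {c \<in> C. \<forall>r\<in>R. c \<notin> r}"

definition three_constrained_classes :: "'c set set \<Rightarrow> 'c \<Rightarrow> 'c \<Rightarrow> 'c \<Rightarrow> bool" where
  "three_constrained_classes R x y z \<longleftrightarrow>
     constrained R x \<and> constrained R y \<and> constrained R z \<and>
     \<not> same_venn R x y \<and> \<not> same_venn R x z \<and> \<not> same_venn R y z"

definition config_101 :: "'c set set \<Rightarrow> 'c list \<Rightarrow> 'c set \<Rightarrow> bool" where
  "config_101 R cs Z \<longleftrightarrow> (\<exists>h i j. h < i \<and> i < j \<and> j < length cs \<and>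
     three_constrained_classes R (cs ! h) (cs ! i) (cs ! j) \<and>
     cs ! h \<in> Z \<and> cs ! i \<notin> Z \<and> cs ! j \<in> Z)"

definition config_010 :: "'c set set \<Rightarrow> 'c list \<Rightarrow> 'c set \<Rightarrow> bool" where
  "config_010 R cs Z \<longleftrightarrow> (\<exists>h i j. h < i \<and> i < j \<and> j < length cs \<and>
     three_constrained_classes R (cs ! h) (cs ! i) (cs ! j) \<and>
     cs ! h \<notin> Z \<and> cs ! i \<in> Z \<and> cs ! j \<notin> Z)"

end

theory Submission
  imports Defs "HOL-Library.Product_Lexorder"
begin

(* Fix a consecutive-ones ordering xs of a row set R whose overlap graph is connected.
   1. Basic geometry of xs: a row is convex in xs, the union of all rows is convex (so the
      unconstrained columns lie outside it), and every constrained Venn class is convex.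
      Hence the constrained classes are linearly ordered; vpos c, the first position of the
      class of c, indexes this order.
   2. Rigidity: any two consecutive-ones orderings of R induce the same betweenness relation
      on constrained columns of pairwise distinct classes (the class order is unique up to
      reversal).  This is proved by propagating the relative order of "crossing pairs" along
      overlap edges.
   3. Necessity: with rigidity, a 1-0-1 configuration, or a 0-1-0 configuration together
      with an unconstrained column of Z, forbids Z from being consecutive.
   4. Sufficiency: if neither configuration exists, sorting the columns by an integer key
      (three slots per class: before Z, in Z, after Z; unconstrained columns at the two
      ends) yields a consecutive-ones ordering of R together with Z.  Absence of 1-0-1
      configurations makes the classes strictly inside the range of Z lie in Z; absence of
      0-1-0 configurations, when Z has unconstrained columns, puts all constrained columns
      outside Z on one side of Z, so that Z can be pushed to an end. *)

section \<open>Positions in a list and convex sets\<close>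

text \<open>The position of an element in a list (meaningful for distinct lists).\<close>
definition pos :: "'a list \<Rightarrow> 'a \<Rightarrow> nat" where
  "pos xs a = (LEAST i. i < length xs \<and> xs ! i = a)"

lemma pos_nth:
  assumes "distinct xs" "i < length xs"
  shows "pos xs (xs ! i) = i"
  unfolding pos_def
proof (rule Least_equality)
  fix j assume "j < length xs \<and> xs ! j = xs ! i"
  then show "i \<le> j" using assms nth_eq_iff_index_eq by fastforce
qed (use assms in simp)

lemma pos_props:
  assumes "a \<in> set xs"
  shows "pos xs a < length xs \<and> xs ! pos xs a = a"
proof -
  obtain i where "i < length xs" "xs ! i = a" using assms by (auto simp: in_set_conv_nth)
  then show ?thesis unfolding pos_def using LeastI[of "\<lambda>i. i < length xs \<and> xs ! i = a" i] by simp
qed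

lemma pos_inj: "a \<in> set xs \<Longrightarrow> b \<in> set xs \<Longrightarrow> pos xs a = pos xs b \<Longrightarrow> a = b"
  by (metis pos_props)

definition between :: "'a list \<Rightarrow> 'a \<Rightarrow> 'a \<Rightarrow> 'a \<Rightarrow> bool" where
  "between xs a b c \<longleftrightarrow>
     (pos xs a < pos xs b \<and> pos xs b < pos xs c) \<or> (pos xs c < pos xs b \<and> pos xs b < pos xs a)"

lemma between_irrefl: "\<not> between xs a a c"
  unfolding between_def by auto

lemma between_split:
  "between xs a b c \<Longrightarrow> pos xs b \<noteq> pos xs d \<Longrightarrow> between xs a b d \<or> between xs d b c"
  unfolding between_def by arith

text \<open>A set is convex in xs if it contains every list element between two of its members.
  For a distinct list this is exactly the consecutive-ones condition of the definitions.\<close>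
definition convex_in :: "'a list \<Rightarrow> 'a set \<Rightarrow> bool" where
  "convex_in xs r \<longleftrightarrow> (\<forall>a b c. a \<in> r \<longrightarrow> c \<in> r \<longrightarrow> a \<in> set xs \<longrightarrow> b \<in> set xs \<longrightarrow> c \<in> set xs \<longrightarrow>
     between xs a b c \<longrightarrow> b \<in> r)"

lemma convex_inD:
  "convex_in xs r \<Longrightarrow> a \<in> r \<Longrightarrow> c \<in> r \<Longrightarrow> a \<in> set xs \<Longrightarrow> b \<in> set xs \<Longrightarrow> c \<in> set xs \<Longrightarrow>
   between xs a b c \<Longrightarrow> b \<in> r"
  unfolding convex_in_def by blast

lemma consecutive_imp_convex:
  assumes "consecutive_in xs r"
  shows "convex_in xs r"
proof -
  obtain lo hi where I: "{k. k < length xs \<and> xs ! k \<in> r} = {lo..<hi}"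
    using assms unfolding consecutive_in_def by blast
  have mem: "k \<in> {lo..<hi} \<longleftrightarrow> k < length xs \<and> xs ! k \<in> r" for k
    using I by blast
  show ?thesis unfolding convex_in_def
  proof (intro allI impI)
    fix a b c assume a: "a \<in> r" and c: "c \<in> r" and "a \<in> set xs" "b \<in> set xs" "c \<in> set xs"
      and bt: "between xs a b c"
    then have "pos xs a \<in> {lo..<hi}" "pos xs c \<in> {lo..<hi}"
      using mem pos_props a c by metis+
    then have "pos xs b \<in> {lo..<hi}" using bt unfolding between_def by auto
    then show "b \<in> r" using mem pos_props[OF \<open>b \<in> set xs\<close>] by metis
  qed
qed

lemma convex_imp_consecutive:
  assumes "distinct xs" "convex_in xs r"
  shows "consecutive_in xs r"
proof (cases "{k. k < length xs \<and> xs ! k \<in> r} = {}")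
  case True then show ?thesis unfolding consecutive_in_def by (metis atLeastLessThan_empty order_refl)
next
  case False
  define S where "S = {k. k < length xs \<and> xs ! k \<in> r}"
  have fin: "finite S" and ne: "S \<noteq> {}" using False unfolding S_def by auto
  then have mi: "Min S \<in> S" and ma: "Max S \<in> S" by auto
  have "S = {Min S..<Suc (Max S)}"
  proof
    show "S \<subseteq> {Min S..<Suc (Max S)}" using fin by (auto simp: less_Suc_eq_le)
    show "{Min S..<Suc (Max S)} \<subseteq> S"
    proof
      fix k assume k: "k \<in> {Min S..<Suc (Max S)}"
      show "k \<in> S"
      proof (cases "k = Min S \<or> k = Max S")
        case False
        then have lt: "Min S < k" "k < Max S" using k by auto
        then have kl: "k < length xs" using ma unfolding S_def by auto
        have bt: "between xs (xs ! Min S) (xs ! k) (xs ! Max S)"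
          using lt kl mi ma pos_nth[OF assms(1)] unfolding S_def between_def by auto
        have "xs ! k \<in> r"
          by (rule convex_inD[OF assms(2) _ _ _ _ _ bt]) (use mi ma kl in \<open>auto simp: S_def\<close>)
        then show ?thesis using kl unfolding S_def by auto
      qed (use mi ma in auto)
    qed
  qed
  then show ?thesis unfolding consecutive_in_def S_def by blast
qed

lemma same_venn_refl: "same_venn R c c"
  and same_venn_sym: "same_venn R c d \<Longrightarrow> same_venn R d c"
  and same_venn_trans: "same_venn R c d \<Longrightarrow> same_venn R d e \<Longrightarrow> same_venn R c e"
  and same_venn_constrained: "same_venn R c d \<Longrightarrow> constrained R d \<Longrightarrow> constrained R c"
  unfolding same_venn_def constrained_def by blast+

lemma overlap_graphD: "(r, s) \<in> overlap_graph R \<Longrightarrow> r \<in> R \<and> s \<in> R \<and> overlaps r s"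
  by (simp add: overlap_graph_def)

lemma unconstrained_class_iff: "c \<in> unconstrained_class C R \<longleftrightarrow> c \<in> C \<and> \<not> constrained R c"
  unfolding unconstrained_class_def constrained_def by blast


section \<open>Geometry of a single consecutive-ones ordering\<close>

locale c1p_order =
  fixes C :: "'c set" and R :: "'c set set" and xs :: "'c list"
  assumes distinct_xs: "distinct xs" and set_xs: "set xs = C"
    and rows_in_C: "\<And>r. r \<in> R \<Longrightarrow> r \<subseteq> C"
    and rows_convex: "\<And>r. r \<in> R \<Longrightarrow> convex_in xs r"
    and connected: "overlap_connected R"
begin

lemma overlap_path: "r \<in> R \<Longrightarrow> s \<in> R \<Longrightarrow> (r, s) \<in> (overlap_graph R)\<^sup>*"
  using connected unfolding overlap_connected_def by blast

lemma pos_neq: "a \<in> C \<Longrightarrow> b \<in> C \<Longrightarrow> a \<noteq> b \<Longrightarrow> pos xs a \<noteq> pos xs b"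
  using pos_inj[of a xs b] set_xs by auto

lemma constrained_in_C: "constrained R c \<Longrightarrow> c \<in> C"
  using rows_in_C unfolding constrained_def by blast

lemma row_between: "r \<in> R \<Longrightarrow> a \<in> r \<Longrightarrow> c \<in> r \<Longrightarrow> b \<in> C \<Longrightarrow> between xs a b c \<Longrightarrow> b \<in> r"
  using convex_inD[OF rows_convex] rows_in_C set_xs by blast

lemma overlap_between:
  assumes "r \<in> R" "s \<in> R" "a \<in> r" "a \<notin> s" "b \<in> r" "b \<in> s" "c \<in> s" "c \<notin> r"
  shows "between xs a b c"
proof -
  have "a \<in> C" "b \<in> C" "c \<in> C" using rows_in_C assms by blast+
  then have "pos xs a \<noteq> pos xs b" "pos xs a \<noteq> pos xs c" "pos xs b \<noteq> pos xs c"
    using pos_neq assms by metis+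
  moreover have "\<not> between xs a c b" using row_between[of r a b c] assms \<open>c \<in> C\<close> by blast
  moreover have "\<not> between xs b a c" using row_between[of s b c a] assms \<open>a \<in> C\<close> by blast
  ultimately show ?thesis unfolding between_def by arith
qed

text \<open>The union of the rows is convex: a column between two constrained columns is
  constrained.  The proof walks along an overlap path from a row through a to a row through c.\<close>
lemma constrained_between:
  assumes r: "r \<in> R" "a \<in> r" and s: "s \<in> R" "c \<in> s" and b: "b \<in> C" "between xs a b c"
  shows "constrained R b"
proof -
  have "\<forall>c\<in>s. \<forall>b\<in>C. between xs a b c \<longrightarrow> constrained R b"
    using overlap_path[OF r(1) s(1)]
  proof (induction rule: rtrancl_induct)
    case base
    then show ?case using row_between[OF r] r(1) unfolding constrained_def by blast
  next
    case (step y z)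
    have yz: "y \<in> R" "z \<in> R" "overlaps y z" using overlap_graphD[OF step(2)] by auto
    obtain d where d: "d \<in> y" "d \<in> z" using yz(3) unfolding overlaps_def by blast
    have dC: "d \<in> C" using rows_in_C[OF yz(1)] d by blast
    show ?case
    proof (intro ballI impI)
      fix c b assume c: "c \<in> z" and bC: "b \<in> C" and bt: "between xs a b c"
      show "constrained R b"
      proof (cases "b = d")
        case False
        then have "between xs a b d \<or> between xs d b c"
          using between_split[OF bt] pos_neq bC dC by blast
        then show ?thesis
          using step.IH d bC row_between[OF yz(2) d(2) c bC] yz(2) unfolding constrained_def by blast
      qed (use d yz in \<open>auto simp: constrained_def\<close>)
    qed
  qed
  then show ?thesis using s b by blast
qed

text \<open>If b lay between two columns a, a' of one class
  but outside it, a row t through b avoids a and a'; following overlaps from t, all rows stay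
  strictly between a and a', yet some row contains a, a contradiction.\<close>
lemma venn_class_convex:
  assumes C3: "a \<in> C" "a' \<in> C" "b \<in> C" and sv: "same_venn R a a'" and ca: "constrained R a"
    and bt: "between xs a b a'"
  shows "same_venn R a b"
proof (rule ccontr)
  assume nsv: "\<not> same_venn R a b"
  have "\<forall>r\<in>R. a \<in> r \<longrightarrow> b \<in> r"
  proof (intro ballI impI)
    fix r assume "r \<in> R" "a \<in> r"
    moreover then have "a' \<in> r" using sv unfolding same_venn_def by blast
    ultimately show "b \<in> r" using row_between bt C3 by blast
  qed
  then obtain t where t: "t \<in> R" "b \<in> t" "a \<notin> t" using nsv unfolding same_venn_def by blast
  then have a't: "a' \<notin> t" using sv unfolding same_venn_def by blast
  have ne: "a \<noteq> a'" using bt unfolding between_def by auto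
  have inside: "\<forall>e\<in>s. between xs a e a'" if "(t, s) \<in> (overlap_graph R)\<^sup>*" for s
    using that
  proof (induction rule: rtrancl_induct)
    case base
    show ?case
    proof
      fix e assume e: "e \<in> t"
      have eC: "e \<in> C" using rows_in_C[OF t(1)] e by blast
      have "e \<noteq> a" "e \<noteq> a'" using e t a't by auto
      then have "pos xs e \<noteq> pos xs a" "pos xs e \<noteq> pos xs a'" "pos xs a \<noteq> pos xs a'"
        using pos_neq eC C3 ne by auto
      moreover have "\<not> between xs e a b" using row_between[OF t(1) e t(2) C3(1)] t(3) by blast
      moreover have "\<not> between xs e a' b" using row_between[OF t(1) e t(2) C3(2)] a't by blast
      ultimately show "between xs a e a'" using bt unfolding between_def by arith
    qed
  next
    case (step y z)
    have yz: "y \<in> R" "z \<in> R" "overlaps y z" using overlap_graphD[OF step(2)] by auto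
    obtain d where d: "d \<in> y" "d \<in> z" using yz(3) unfolding overlaps_def by blast
    have bd: "between xs a d a'" using step.IH d by blast
    show ?case
    proof
      fix e assume e: "e \<in> z"
      have eC: "e \<in> C" using rows_in_C[OF yz(2)] e by blast
      show "between xs a e a'"
      proof (rule ccontr)
        assume nb: "\<not> between xs a e a'"
        have "a \<in> z \<or> a' \<in> z"
        proof (cases "e = a \<or> e = a'")
          case False
          then have "pos xs e \<noteq> pos xs a" "pos xs e \<noteq> pos xs a'" using pos_neq eC C3 by auto
          then have "between xs e a d \<or> between xs e a' d" using bd nb unfolding between_def by arith
          then show ?thesis using row_between[OF yz(2) e d(2)] C3 by blast
        qed (use e in blast)
        then have "a \<in> z" "a' \<in> z" using sv yz(2) unfolding same_venn_def by blast+
        then have "y \<subseteq> z" using row_between[OF yz(2)] step.IH rows_in_C[OF yz(1)] by (meson subsetI subsetD)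
        then show False using yz(3) unfolding overlaps_def by blast
      qed
    qed
  qed
  obtain r0 where "r0 \<in> R" "a \<in> r0" using ca unfolding constrained_def by blast
  then have "between xs a a a'" using inside[OF overlap_path[OF t(1)]] by blast
  then show False using between_irrefl by metis
qed

text \<open>vpos c is the first position of the Venn class of c; on constrained columns it is a
  monotone index of the (convex, hence linearly ordered) constrained classes.\<close>
definition vpos :: "'c \<Rightarrow> nat" where
  "vpos c = (LEAST p. p < length xs \<and> same_venn R (xs ! p) c)"

lemma vpos_props:
  assumes "c \<in> C"
  shows "vpos c \<le> pos xs c \<and> vpos c < length xs \<and> same_venn R (xs ! vpos c) c"
proof -
  have P: "pos xs c < length xs \<and> same_venn R (xs ! pos xs c) c"
    using pos_props[of c xs] assms set_xs same_venn_refl by metis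
  then show ?thesis unfolding vpos_def using Least_le[of _ "pos xs c"] LeastI[of _ "pos xs c"]
    by (metis (no_types, lifting))
qed

lemma vpos_cong: "same_venn R c d \<Longrightarrow> vpos c = vpos d"
  unfolding vpos_def by (metis same_venn_sym same_venn_trans)

lemma vpos_eq_imp_same_venn: "c \<in> C \<Longrightarrow> d \<in> C \<Longrightarrow> vpos c = vpos d \<Longrightarrow> same_venn R c d"
  using vpos_props by (metis same_venn_sym same_venn_trans)

text \<open>Since classes are convex, a constrained class starts after every column preceding it
  that belongs to a different class.\<close>
lemma vpos_strict_mono:
  assumes C2: "c \<in> C" "d \<in> C" and cd: "constrained R d"
    and nsv: "\<not> same_venn R c d" and lt: "pos xs c < pos xs d"
  shows "vpos c < vpos d"
proof (rule ccontr)
  assume "\<not> vpos c < vpos d"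
  define e where "e = xs ! vpos d"
  have eC: "e \<in> C" and sve: "same_venn R e d" and pe: "pos xs e = vpos d"
    unfolding e_def using vpos_props[OF C2(2)] set_xs pos_nth[OF distinct_xs] by auto
  have "e \<noteq> c" using sve nsv by blast
  then have "between xs e c d"
    using \<open>\<not> vpos c < vpos d\<close> pe vpos_props[OF C2(1)] lt pos_neq[OF eC C2(1)]
    unfolding between_def by simp
  then have "same_venn R e c"
    using venn_class_convex[OF eC C2(2) C2(1) sve same_venn_constrained[OF sve cd]] by blast
  then show False using sve nsv same_venn_trans same_venn_sym by metis
qed

lemma vpos_mono:
  assumes "c \<in> C" "d \<in> C" "constrained R d" "pos xs c \<le> pos xs d"
  shows "vpos c \<le> vpos d"
proof (cases "same_venn R c d")
  case False
  then have "c \<noteq> d" using same_venn_refl by metis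
  then have "pos xs c < pos xs d" using assms pos_neq by fastforce
  then show ?thesis using vpos_strict_mono[OF assms(1-3) False] by simp
qed (simp add: vpos_cong)

lemma vpos_less_imp_pos_less:
  "c \<in> C \<Longrightarrow> d \<in> C \<Longrightarrow> constrained R c \<Longrightarrow> vpos c < vpos d \<Longrightarrow> pos xs c < pos xs d"
  using vpos_mono[of d c] by fastforce

text \<open>Two distinct constrained classes force an overlap edge: some row separates them, and
  a path in the overlap graph leaves that row.\<close>
lemma exists_overlap:
  assumes "constrained R x" "constrained R y" "\<not> same_venn R x y"
  shows "\<exists>r s. r \<in> R \<and> s \<in> R \<and> overlaps r s"
proof -
  obtain r where r: "r \<in> R" "(x \<in> r) \<noteq> (y \<in> r)" using assms(3) unfolding same_venn_def by blast
  obtain s where s: "s \<in> R" "s \<noteq> r"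
    using assms(1,2) r unfolding constrained_def by metis
  obtain r' where "(r, r') \<in> overlap_graph R"
    using overlap_path[OF r(1) s(1)] s(2) by (metis converse_rtranclE)
  then show ?thesis using overlap_graphD by blast
qed

text \<open>The three regions of an overlap edge are distinct constrained classes, so two constrained
  classes always leave room for a third.\<close>
lemma third_class:
  assumes "constrained R x" "constrained R y" "\<not> same_venn R x y"
  shows "\<exists>w\<in>C. constrained R w \<and> \<not> same_venn R w x \<and> \<not> same_venn R w y"
proof -
  obtain q q' where qq: "q \<in> R" "q' \<in> R" "overlaps q q'" using exists_overlap[OF assms] by blast
  then obtain p1 p2 p3 where p: "p1 \<in> q" "p1 \<notin> q'" "p2 \<in> q" "p2 \<in> q'" "p3 \<in> q'" "p3 \<notin> q"
    unfolding overlaps_def by blast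
  have "p1 \<in> C" "p2 \<in> C" "p3 \<in> C" using p rows_in_C qq by blast+
  moreover have "constrained R p1" "constrained R p2" "constrained R p3"
    using p qq unfolding constrained_def by blast+
  moreover have "\<not> same_venn R p1 p2" "\<not> same_venn R p1 p3" "\<not> same_venn R p2 p3"
    using p qq unfolding same_venn_def by blast+
  ultimately show ?thesis using same_venn_trans same_venn_sym by metis
qed

lemma config_from_vpos:
  assumes C3: "x \<in> C" "y \<in> C" "z \<in> C"
    and c: "constrained R x" "constrained R y" "constrained R z"
    and m: "vpos x < vpos y" "vpos y < vpos z"
  shows "x \<in> Z \<Longrightarrow> y \<notin> Z \<Longrightarrow> z \<in> Z \<Longrightarrow> config_101 R xs Z"
    and "x \<notin> Z \<Longrightarrow> y \<in> Z \<Longrightarrow> z \<notin> Z \<Longrightarrow> config_010 R xs Z"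
proof -
  have "three_constrained_classes R x y z"
    using c vpos_cong[of x y] vpos_cong[of x z] vpos_cong[of y z] m
    unfolding three_constrained_classes_def by auto
  moreover have "pos xs x < pos xs y" "pos xs y < pos xs z"
    using vpos_less_imp_pos_less C3 c m by blast+
  moreover have "pos xs z < length xs" "xs ! pos xs x = x" "xs ! pos xs y = y" "xs ! pos xs z = z"
    using pos_props C3 set_xs by metis+
  ultimately show "x \<in> Z \<Longrightarrow> y \<notin> Z \<Longrightarrow> z \<in> Z \<Longrightarrow> config_101 R xs Z"
    and "x \<notin> Z \<Longrightarrow> y \<in> Z \<Longrightarrow> z \<notin> Z \<Longrightarrow> config_010 R xs Z"
    unfolding config_101_def config_010_def by metis+
qed

end

section \<open>Rigidity: two consecutive-ones orderings induce the same class betweenness\<close>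

text \<open>A crossing pair of two rows r, s: two columns of the union that are separated by r or by s.
  For overlapping rows, all crossing pairs are ordered alike in any two orderings.\<close>
definition crossing :: "'c set \<Rightarrow> 'c set \<Rightarrow> 'c \<Rightarrow> 'c \<Rightarrow> bool" where
  "crossing r s a b \<longleftrightarrow> a \<in> r \<union> s \<and> b \<in> r \<union> s \<and> ((a \<in> r) \<noteq> (b \<in> r) \<or> (a \<in> s) \<noteq> (b \<in> s))"

lemma crossing_sym: "crossing r s a b = crossing s r a b"
  unfolding crossing_def by blast

text \<open>Consecutive overlap edges r-s and s-t share a crossing pair; this lets the relative order
  of crossing pairs propagate along paths of the overlap graph.\<close>
lemma common_crossing:
  assumes "overlaps r s" "overlaps s t"
  shows "\<exists>a b. crossing r s a b \<and> crossing s t a b"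
proof -
  obtain p q u w where "p \<in> s" "p \<in> r" "q \<in> s" "q \<notin> r" "u \<in> s" "u \<in> t" "w \<in> s" "w \<notin> t"
    using assms unfolding overlaps_def by blast
  then show ?thesis
    unfolding crossing_def by (cases "p \<in> t"; cases "q \<in> t"; cases "w \<in> r"; cases "u \<in> r") blast+
qed

locale two_c1p_orders = X: c1p_order C R xs + Y: c1p_order C R ys
  for C :: "'c set" and R xs ys
begin

definition agree :: "'c \<Rightarrow> 'c \<Rightarrow> bool" where
  "agree a b \<longleftrightarrow> ((pos xs a < pos xs b) = (pos ys a < pos ys b))"

lemma agree_sym: "a \<in> C \<Longrightarrow> b \<in> C \<Longrightarrow> a \<noteq> b \<Longrightarrow> agree a b = agree b a"
  using X.pos_neq Y.pos_neq unfolding agree_def by (metis linorder_neqE_nat not_less_iff_gr_or_eq)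

text \<open>The three regions of two overlapping rows appear in the same order in both orderings,
  so all pairs taken from different regions are ordered alike.\<close>
lemma agree_overlap:
  assumes "r \<in> R" "s \<in> R" "a \<in> r" "a \<notin> s" "b \<in> r" "b \<in> s" "c \<in> s" "c \<notin> r"
  shows "agree a b = agree b c" and "agree a b = agree a c"
  using X.overlap_between[OF assms] Y.overlap_between[OF assms]
  unfolding agree_def between_def by auto

text \<open>Every crossing pair of an overlap edge r-s is ordered like a fixed pair p1 (in r only),
  p3 (in s only), by chaining through a common column p2 of both rows.\<close>
lemma crossing_agree_uniform:
  assumes rs: "r \<in> R" "s \<in> R" and p: "p1 \<in> r" "p1 \<notin> s" "p2 \<in> r" "p2 \<in> s" "p3 \<in> s" "p3 \<notin> r"
    and cr: "crossing r s a b"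
  shows "agree a b = agree p1 p3"
proof -
  note E = agree_overlap[OF rs]
  have A13: "agree x z = agree p1 p3" if "x \<in> r" "x \<notin> s" "z \<in> s" "z \<notin> r" for x z
    using E(1)[of x p2 z] E(2)[of x p2 z] E(1)[of p1 p2 z] E(2)[of p1 p2 z] E(2)[of p1 p2 p3] that p by simp
  have A12: "agree x y = agree p1 p3" if "x \<in> r" "x \<notin> s" "y \<in> r" "y \<in> s" for x y
    using E(2)[of x y p3] A13[of x p3] that p by simp
  have A23: "agree y z = agree p1 p3" if "y \<in> r" "y \<in> s" "z \<in> s" "z \<notin> r" for y z
    using E(1)[of p1 y z] E(2)[of p1 y z] A13[of p1 z] that p by simp
  have "a \<in> C" "b \<in> C" "a \<noteq> b" using cr rs X.rows_in_C unfolding crossing_def by blast+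
  then have sym: "agree a b = agree b a" by (rule agree_sym)
  consider "a \<in> r" "a \<notin> s" "b \<in> r" "b \<in> s" | "a \<in> r" "a \<notin> s" "b \<notin> r" "b \<in> s"
    | "a \<in> r" "a \<in> s" "b \<notin> r" "b \<in> s" | "b \<in> r" "b \<notin> s" "a \<in> r" "a \<in> s"
    | "b \<in> r" "b \<notin> s" "a \<notin> r" "a \<in> s" | "b \<in> r" "b \<in> s" "a \<notin> r" "a \<in> s"
    using cr unfolding crossing_def by blast
  then show ?thesis
    by cases (use A12[of a b] A13[of a b] A23[of a b] A12[of b a] A13[of b a] A23[of b a] sym in simp_all)
qed

lemma crossing_agree_eq:
  assumes "r \<in> R" "s \<in> R" "overlaps r s" "crossing r s a b" "crossing r s c d"
  shows "agree a b = agree c d"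
proof -
  obtain p1 p2 p3 where "p1 \<in> r" "p1 \<notin> s" "p2 \<in> r" "p2 \<in> s" "p3 \<in> s" "p3 \<notin> r"
    using assms(3) unfolding overlaps_def by blast
  from crossing_agree_uniform[OF assms(1,2) this] show ?thesis using assms(4,5) by metis
qed

text \<open>A column outside a row q is never between two columns of q.\<close>
lemma agree_outside_row:
  assumes "q \<in> R" "a \<in> q" "d \<in> q" "y \<in> C" "y \<notin> q"
  shows "agree a y = agree d y"
proof -
  have "a \<in> C" "d \<in> C" "a \<noteq> y" "d \<noteq> y" using X.rows_in_C assms by blast+
  then have "pos xs a \<noteq> pos xs y" "pos xs d \<noteq> pos xs y" "pos ys a \<noteq> pos ys y" "pos ys d \<noteq> pos ys y"
    using X.pos_neq Y.pos_neq assms(4) by auto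
  moreover have "\<not> between xs a y d" "\<not> between ys a y d"
    using X.row_between[OF assms(1-4)] Y.row_between[OF assms(1-4)] assms(5) by blast+
  ultimately show ?thesis unfolding agree_def between_def by arith
qed

context
  fixes r0 s0 a0 b0
  assumes ref: "r0 \<in> R" "s0 \<in> R" "overlaps r0 s0" "crossing r0 s0 a0 b0"
begin

lemma crossing_agree_ref:
  assumes "r \<in> R" "s \<in> R" "overlaps r s" "crossing r s a b"
  shows "agree a b = agree a0 b0"
proof -
  have "\<forall>s a b. s \<in> R \<longrightarrow> overlaps r s \<longrightarrow> crossing r s a b \<longrightarrow> agree a b = agree a0 b0"
    using X.overlap_path[OF ref(1) assms(1)]
  proof (induction rule: rtrancl_induct)
    case base
    show ?case
    proof (intro allI impI)
      fix s a b assume h: "s \<in> R" "overlaps r0 s" "crossing r0 s a b"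
      obtain c d where cd: "crossing s0 r0 c d" "crossing r0 s c d"
        using common_crossing[OF _ h(2)] ref(3) overlaps_def by (metis inf_commute)
      show "agree a b = agree a0 b0"
        using crossing_agree_eq[OF ref(1-3)] cd(1) crossing_sym ref(4)
          crossing_agree_eq[OF ref(1) h cd(2)] by metis
    qed
  next
    case (step y z)
    have yz: "y \<in> R" "z \<in> R" "overlaps y z" using overlap_graphD[OF step(2)] by auto
    show ?case
    proof (intro allI impI)
      fix s a b assume h: "s \<in> R" "overlaps z s" "crossing z s a b"
      obtain c d where cd: "crossing y z c d" "crossing z s c d"
        using common_crossing[OF yz(3) h(2)] by blast
      show "agree a b = agree a0 b0"
        using step.IH yz cd(1) crossing_agree_eq[OF yz(2) h cd(2)] by metis
    qed
  qed
  then show ?thesis using assms by blast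
qed

lemma agree_row_vs_outside:
  assumes "(q, s) \<in> (overlap_graph R)\<^sup>*" "y \<in> s" "y \<in> C" "y \<notin> q" "a \<in> q"
  shows "agree a y = agree a0 b0"
proof -
  have "y \<notin> q \<longrightarrow> (\<forall>a\<in>q. agree a y = agree a0 b0)"
    using assms(1)
  proof (induction rule: converse_rtrancl_induct)
    case base
    then show ?case using assms(2) by blast
  next
    case (step q q')
    have qq: "q \<in> R" "q' \<in> R" "overlaps q q'" using overlap_graphD[OF step(1)] by auto
    obtain d where d: "d \<in> q" "d \<in> q'" using qq(3) unfolding overlaps_def by blast
    show ?case
    proof (intro impI ballI)
      fix a assume yq: "y \<notin> q" and a: "a \<in> q"
      show "agree a y = agree a0 b0"
      proof (cases "y \<in> q'")
        case True
        then have "crossing q q' a y" using yq a unfolding crossing_def by blast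
        then show ?thesis using crossing_agree_ref[OF qq] by blast
      next
        case False
        then show ?thesis using step.IH d agree_outside_row[OF qq(1) a d(1) assms(3) yq] by simp
      qed
    qed
  qed
  then show ?thesis using assms(4,5) by blast
qed

text \<open>All pairs of constrained columns of distinct classes are ordered like (a0, b0): some row
  contains one column but not the other.\<close>
lemma agree_ref:
  assumes "x \<in> C" "y \<in> C" "constrained R x" "constrained R y" "\<not> same_venn R x y"
  shows "agree x y = agree a0 b0"
proof -
  obtain r where r: "r \<in> R" "(x \<in> r) \<noteq> (y \<in> r)" using assms(5) unfolding same_venn_def by blast
  show ?thesis
  proof (cases "x \<in> r")
    case True
    obtain s where "s \<in> R" "y \<in> s" using assms(4) unfolding constrained_def by blast
    then show ?thesis using agree_row_vs_outside[OF X.overlap_path[OF r(1)]] assms(2) True r(2) by blast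
  next
    case False
    obtain s where "s \<in> R" "x \<in> s" using assms(3) unfolding constrained_def by blast
    then have "agree y x = agree a0 b0"
      using agree_row_vs_outside[OF X.overlap_path[OF r(1)]] assms(1) False r(2) by blast
    moreover have "x \<noteq> y" using assms(5) same_venn_refl by metis
    ultimately show ?thesis using agree_sym assms(1,2) by metis
  qed
qed

end

text \<open>Rigidity: betweenness of constrained columns of distinct classes is the same in both
  orderings, since all such pairs are ordered like one fixed reference pair.\<close>
theorem between_rigid:
  assumes C3: "x \<in> C" "y \<in> C" "z \<in> C"
    and c: "constrained R x" "constrained R y" "constrained R z"
    and n: "\<not> same_venn R x y" "\<not> same_venn R y z" and bt: "between xs x y z"
  shows "between ys x y z"
proof -
  obtain r0 s0 where e: "r0 \<in> R" "s0 \<in> R" "overlaps r0 s0"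
    using X.exists_overlap[OF c(1,2) n(1)] by blast
  then obtain a0 b0 where cr: "crossing r0 s0 a0 b0" unfolding overlaps_def crossing_def by blast
  have "agree x y = agree y z" using agree_ref[OF e cr] C3 c n by metis
  moreover have "pos ys x \<noteq> pos ys y" "pos ys y \<noteq> pos ys z"
    using Y.pos_neq C3 n same_venn_refl by metis+
  ultimately show ?thesis using bt unfolding agree_def between_def by arith
qed

end

section \<open>Necessity of the configurations\<close>

context two_c1p_orders
begin

lemma config_triple_between:
  assumes hij: "h < i" "i < j" "j < length xs"
    and tc: "three_constrained_classes R (xs ! h) (xs ! i) (xs ! j)"
  shows "between ys (xs ! h) (xs ! i) (xs ! j)"
proof (rule between_rigid)
  show "xs ! h \<in> C" "xs ! i \<in> C" "xs ! j \<in> C" using hij X.set_xs by auto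
  show "between xs (xs ! h) (xs ! i) (xs ! j)"
    using hij pos_nth[OF X.distinct_xs] unfolding between_def by auto
qed (use tc in \<open>auto simp: three_constrained_classes_def\<close>)

lemma no_config_101:
  assumes Z: "convex_in ys Z"
  shows "\<not> config_101 R xs Z"
proof
  assume "config_101 R xs Z"
  then obtain h i j where hij: "h < i" "i < j" "j < length xs"
    and tc: "three_constrained_classes R (xs ! h) (xs ! i) (xs ! j)"
    and m: "xs ! h \<in> Z" "xs ! i \<notin> Z" "xs ! j \<in> Z"
    unfolding config_101_def by blast
  have mem: "xs ! k \<in> set ys" if "k < length xs" for k
    using nth_mem[OF that] X.set_xs Y.set_xs by simp
  have "xs ! i \<in> Z"
    using convex_inD[OF Z m(1,3) mem mem mem config_triple_between[OF hij tc]] hij by simp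
  then show False using m(2) by contradiction
qed

text \<open>If Z is convex in ys and contains an unconstrained column u, a 0-1-0 configuration x, y, z
  is impossible: u lies outside the convex union of the rows, hence not between x and z, and
  not beyond x or z either, since Z is convex and contains y but neither x nor z.\<close>
lemma no_config_010:
  assumes Z: "convex_in ys Z" and u: "u \<in> Z" "u \<in> C" "\<not> constrained R u"
  shows "\<not> config_010 R xs Z"
proof
  assume "config_010 R xs Z"
  then obtain h i j where hij: "h < i" "i < j" "j < length xs"
    and tc: "three_constrained_classes R (xs ! h) (xs ! i) (xs ! j)"
    and "xs ! h \<notin> Z" "xs ! i \<in> Z" "xs ! j \<notin> Z"
    unfolding config_010_def by blast
  define x y z where "x = xs ! h" and "y = xs ! i" and "z = xs ! j"
  have m: "x \<notin> Z" "y \<in> Z" "z \<notin> Z" unfolding x_def y_def z_def by fact+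
  have C3: "x \<in> C" "y \<in> C" "z \<in> C" unfolding x_def y_def z_def using hij X.set_xs by auto
  have cc: "constrained R x" "constrained R y" "constrained R z"
    using tc unfolding three_constrained_classes_def x_def y_def z_def by auto
  have bt: "between ys x y z" unfolding x_def y_def z_def using config_triple_between[OF hij tc] .
  have "u \<noteq> x" "u \<noteq> y" "u \<noteq> z" using cc u(3) by auto
  then have "pos ys u \<noteq> pos ys x" "pos ys u \<noteq> pos ys y" "pos ys u \<noteq> pos ys z"
    using Y.pos_neq[OF u(2)] C3 by blast+
  moreover obtain rx rz where rx: "rx \<in> R" "x \<in> rx" and rz: "rz \<in> R" "z \<in> rz"
    using cc unfolding constrained_def by blast
  then have "\<not> between ys x u z" using Y.constrained_between[OF rx rz u(2)] u(3) by blast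
  moreover have "u \<in> set ys" "x \<in> set ys" "y \<in> set ys" "z \<in> set ys" using C3 u(2) Y.set_xs by simp_all
  then have "\<not> between ys u x y" "\<not> between ys u z y"
    using convex_inD[OF Z u(1) m(2)] m(1,3) by blast+
  ultimately show False using bt unfolding between_def by arith
qed

end

lemma c1p_order_of_ordering:
  assumes "c1p_ordering C R ys" "\<forall>r\<in>R. r \<subseteq> C" "overlap_connected R"
  shows "c1p_order C R ys"
  using assms consecutive_imp_convex unfolding c1p_ordering_def c1p_order_def by blast

lemma configuration_obstructs:
  assumes xs: "c1p_order C R xs"
    and cfg: "config_101 R xs Z \<or> (config_010 R xs Z \<and> Z \<inter> unconstrained_class C R \<noteq> {})"
  shows "\<not> has_c1p C (R \<union> {Z})"
proof
  assume "has_c1p C (R \<union> {Z})"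
  then obtain ys where ys: "c1p_ordering C (R \<union> {Z}) ys" unfolding has_c1p_def by blast
  then have Z: "convex_in ys Z" using consecutive_imp_convex unfolding c1p_ordering_def by blast
  have "c1p_ordering C R ys" using ys unfolding c1p_ordering_def by blast
  then have "c1p_order C R ys"
    using c1p_order_of_ordering c1p_order.rows_in_C[OF xs] c1p_order.connected[OF xs] by blast
  then interpret two_c1p_orders C R xs ys using xs by (simp add: two_c1p_orders_def)
  from cfg show False
  proof
    assume "config_101 R xs Z"
    then show False using no_config_101[OF Z] by contradiction
  next
    assume "config_010 R xs Z \<and> Z \<inter> unconstrained_class C R \<noteq> {}"
    then obtain u where "config_010 R xs Z" "u \<in> Z" "u \<in> unconstrained_class C R" by blast
    then show False using no_config_010[OF Z, of u] by (simp add: unconstrained_class_iff)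
  qed
qed

section \<open>Sufficiency: building an ordering from an integer key\<close>

lemma sort_key_pos_less:
  fixes k :: "'a \<Rightarrow> 'k::linorder"
  assumes inj: "inj_on k (set xs)" and a: "a \<in> set xs" and b: "b \<in> set xs"
  shows "pos (sort_key k xs) a < pos (sort_key k xs) b \<longleftrightarrow> k a < k b"
proof -
  define ys where "ys = sort_key k xs"
  have so: "sorted (map k ys)" unfolding ys_def by simp
  have pa: "pos ys a < length ys" "ys ! pos ys a = a" and pb: "pos ys b < length ys" "ys ! pos ys b = b"
    using pos_props[of a ys] pos_props[of b ys] a b unfolding ys_def by auto
  have mono: "k (ys ! i) \<le> k (ys ! j)" if "i \<le> j" "j < length ys" for i j
    using sorted_nth_mono[OF so] that by simp
  show ?thesis unfolding ys_def[symmetric]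
  proof
    assume lt: "pos ys a < pos ys b"
    then have "k a \<noteq> k b" using inj a b unfolding inj_on_def by auto
    then show "k a < k b" using mono[of "pos ys a" "pos ys b"] lt pa pb by simp
  next
    assume "k a < k b"
    then show "pos ys a < pos ys b" using mono[of "pos ys b" "pos ys a"] pa pb by force
  qed
qed

context c1p_order
begin

lemma row_convex_by_key:
  fixes phi :: "'c \<Rightarrow> int"
  assumes slot: "\<And>c. c \<in> C \<Longrightarrow> constrained R c \<Longrightarrow>
      3 * int (vpos c) \<le> phi c \<and> phi c \<le> 3 * int (vpos c) + 2"
    and ends: "\<And>c. c \<in> C \<Longrightarrow> \<not> constrained R c \<Longrightarrow> phi c < 0 \<or> 3 * int (length xs) \<le> phi c"
    and r: "r \<in> R" "a \<in> r" "c \<in> r" and b: "b \<in> C" and le: "phi a \<le> phi b" "phi b \<le> phi c"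
  shows "b \<in> r"
proof -
  have C2: "a \<in> C" "c \<in> C" using rows_in_C r by blast+
  have ca: "constrained R a" "constrained R c" using r unfolding constrained_def by blast+
  have pa: "3 * int (vpos a) \<le> phi a \<and> phi a \<le> 3 * int (vpos a) + 2"
    and pc: "3 * int (vpos c) \<le> phi c \<and> phi c \<le> 3 * int (vpos c) + 2"
    using slot C2 ca by blast+
  have cb: "constrained R b"
  proof (rule ccontr)
    assume "\<not> constrained R b"
    then have "phi b < 0 \<or> 3 * int (length xs) \<le> phi b" using ends b by blast
    then show False using pa pc le vpos_props[OF C2(1)] vpos_props[OF C2(2)] by linarith
  qed
  have pb: "3 * int (vpos b) \<le> phi b \<and> phi b \<le> 3 * int (vpos b) + 2" using slot b cb by blast
  have m1: "vpos a \<le> vpos b" and m2: "vpos b \<le> vpos c" using pa pb pc le by linarith+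
  show ?thesis
  proof (cases "vpos a = vpos b \<or> vpos b = vpos c")
    case True
    then have "same_venn R a b \<or> same_venn R b c" using vpos_eq_imp_same_venn C2 b by blast
    then show ?thesis using r unfolding same_venn_def by blast
  next
    case False
    then have "pos xs a < pos xs b" "pos xs b < pos xs c"
      using vpos_less_imp_pos_less C2 b ca cb m1 m2 by auto
    then show ?thesis using row_between[OF r b] unfolding between_def by blast
  qed
qed

lemma c1p_from_key:
  fixes phi :: "'c \<Rightarrow> int" and lo hi :: int
  assumes slot: "\<And>c. c \<in> C \<Longrightarrow> constrained R c \<Longrightarrow>
      3 * int (vpos c) \<le> phi c \<and> phi c \<le> 3 * int (vpos c) + 2"
    and ends: "\<And>c. c \<in> C \<Longrightarrow> \<not> constrained R c \<Longrightarrow> phi c < 0 \<or> 3 * int (length xs) \<le> phi c"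
    and Z_interval: "\<And>c. c \<in> C \<Longrightarrow> c \<in> Z \<longleftrightarrow> lo \<le> phi c \<and> phi c \<le> hi"
  shows "has_c1p C (R \<union> {Z})"
proof -
  define k where "k c = (phi c, pos xs c)" for c
  define ys where "ys = sort_key k xs"
  have "inj_on k (set xs)"
  proof (rule inj_onI)
    fix a b assume "a \<in> set xs" "b \<in> set xs" "k a = k b"
    then show "a = b" using pos_inj[of a xs b] unfolding k_def by simp
  qed
  then have ord: "pos ys a < pos ys b \<longleftrightarrow> k a < k b" if "a \<in> C" "b \<in> C" for a b
    unfolding ys_def using sort_key_pos_less[of k xs a b] that set_xs by simp
  have set_ys: "set ys = C" and "distinct ys" unfolding ys_def using set_xs distinct_xs by auto
  have le: "phi a \<le> phi b" if "a \<in> C" "b \<in> C" "pos ys a < pos ys b" for a b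
    using ord[OF that(1,2)] that(3) unfolding k_def by auto
  have "convex_in ys r" if r: "r \<in> R \<union> {Z}" for r
    unfolding convex_in_def
  proof (intro allI impI)
    fix a b c assume h: "a \<in> r" "c \<in> r" "a \<in> set ys" "b \<in> set ys" "c \<in> set ys" "between ys a b c"
    then have C3: "a \<in> C" "b \<in> C" "c \<in> C" using set_ys by auto
    then consider "phi a \<le> phi b" "phi b \<le> phi c" | "phi c \<le> phi b" "phi b \<le> phi a"
      using h(6) le unfolding between_def by blast
    then show "b \<in> r"
    proof cases
      case 1
      then show ?thesis using r h(1,2) C3 Z_interval row_convex_by_key[OF slot ends _ h(1,2)] by fastforce
    next
      case 2
      then show ?thesis using r h(1,2) C3 Z_interval row_convex_by_key[OF slot ends _ h(2,1)] by fastforce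
    qed
  qed
  then have "c1p_ordering C (R \<union> {Z}) ys"
    unfolding c1p_ordering_def using set_ys \<open>distinct ys\<close> convex_imp_consecutive by blast
  then show ?thesis unfolding has_c1p_def by blast
qed

end

locale no_configuration = c1p_order C R xs for C :: "'c set" and R xs +
  fixes Z :: "'c set"
  assumes no_101: "\<not> config_101 R xs Z"
    and no_010: "config_010 R xs Z \<Longrightarrow> Z \<inter> unconstrained_class C R = {}"
begin

definition Z_free :: bool where
  "Z_free \<longleftrightarrow> Z \<inter> unconstrained_class C R \<noteq> {}"

lemma c1p_if_Z_unconstrained:
  assumes "\<forall>c\<in>Z. \<not> constrained R c"
  shows "has_c1p C (R \<union> {Z})"
proof -
  define phi :: "'c \<Rightarrow> int" where
    "phi c = (if constrained R c then 3 * int (vpos c)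
      else if c \<in> Z then -1 else 3 * int (length xs))" for c
  show ?thesis
  proof (rule c1p_from_key[where phi = phi and lo = "-1" and hi = "-1"])
    fix c assume "c \<in> C"
    then show "c \<in> Z \<longleftrightarrow> -1 \<le> phi c \<and> phi c \<le> -1" using assms unfolding phi_def by auto
  qed (auto simp: phi_def)
qed

definition zmin :: nat where "zmin = Min (vpos ` {c \<in> Z. constrained R c})"
definition zmax :: nat where "zmax = Max (vpos ` {c \<in> Z. constrained R c})"

context
  assumes Z_constrained: "\<exists>c\<in>Z. constrained R c"
begin

lemma Z_constrained_finite: "finite (vpos ` {c \<in> Z. constrained R c})"
proof -
  have "{c \<in> Z. constrained R c} \<subseteq> C" using constrained_in_C by blast
  then show ?thesis using set_xs finite_subset by blast
qed

lemma zrange: "c \<in> Z \<Longrightarrow> constrained R c \<Longrightarrow> zmin \<le> vpos c \<and> vpos c \<le> zmax"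
  unfolding zmin_def zmax_def using Z_constrained_finite by auto

lemma zmin_attained: obtains l where "l \<in> C" "l \<in> Z" "constrained R l" "vpos l = zmin"
proof -
  have "vpos ` {c \<in> Z. constrained R c} \<noteq> {}" using Z_constrained by blast
  then have "zmin \<in> vpos ` {c \<in> Z. constrained R c}"
    unfolding zmin_def using Min_in Z_constrained_finite by blast
  then obtain l where "l \<in> Z" "constrained R l" "zmin = vpos l" by blast
  then show ?thesis using that[of l] constrained_in_C by simp
qed

lemma zmax_attained: obtains h where "h \<in> C" "h \<in> Z" "constrained R h" "vpos h = zmax"
proof -
  have "vpos ` {c \<in> Z. constrained R c} \<noteq> {}" using Z_constrained by blast
  then have "zmax \<in> vpos ` {c \<in> Z. constrained R c}"
    unfolding zmax_def using Max_in Z_constrained_finite by blast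
  then obtain h where "h \<in> Z" "constrained R h" "zmax = vpos h" by blast
  then show ?thesis using that[of h] constrained_in_C by simp
qed

lemma zmax_less: "zmax < length xs"
proof -
  obtain h where "h \<in> C" "vpos h = zmax" by (rule zmax_attained)
  then show ?thesis using vpos_props[of h] by simp
qed

lemma zmin_le_zmax: "zmin \<le> zmax"
proof -
  obtain l where "l \<in> Z" "constrained R l" by (rule zmin_attained)
  then show ?thesis using zrange by fastforce
qed

text \<open>No 1-0-1 configuration: classes strictly between zmin and zmax lie entirely in Z.\<close>
lemma outside_Z_flank:
  assumes "b \<in> C" "constrained R b" "b \<notin> Z"
  shows "vpos b \<le> zmin \<or> zmax \<le> vpos b"
proof (rule ccontr)
  assume "\<not> ?thesis"
  then have between: "zmin < vpos b" "vpos b < zmax" by auto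
  obtain l where l: "l \<in> C" "l \<in> Z" "constrained R l" "vpos l = zmin" by (rule zmin_attained)
  obtain h where h: "h \<in> C" "h \<in> Z" "constrained R h" "vpos h = zmax" by (rule zmax_attained)
  have "config_101 R xs Z"
    using config_from_vpos(1)[OF l(1) assms(1) h(1) l(3) assms(2) h(3)] l(2,4) h(2,4) assms(3) between
    by simp
  then show False using no_101 by contradiction
qed

text \<open>If Z meets the unconstrained class, the constrained columns outside Z all lie on one side
  of Z: otherwise two of them, d before and b after, together with a third class (provided by
  third_class when d and b are at the very ends zmin, zmax) form a 0-1-0 configuration.\<close>
lemma outside_Z_one_sided:
  assumes free: "Z_free"
  shows "(\<forall>b\<in>C. constrained R b \<and> b \<notin> Z \<longrightarrow> zmax \<le> vpos b) \<or>
         (\<forall>b\<in>C. constrained R b \<and> b \<notin> Z \<longrightarrow> vpos b \<le> zmin)"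
proof (rule ccontr)
  have no_pattern: False
    if "x \<in> C" "y \<in> C" "z \<in> C" "constrained R x" "constrained R y" "constrained R z"
      "vpos x < vpos y" "vpos y < vpos z" "x \<notin> Z" "y \<in> Z" "z \<notin> Z" for x y z
    using config_from_vpos(2)[OF that(1-8)] that(9-11) no_010 free unfolding Z_free_def by blast
  assume "\<not> ?thesis"
  then obtain d b where d: "d \<in> C" "constrained R d" "d \<notin> Z" "vpos d < zmax"
    and b: "b \<in> C" "constrained R b" "b \<notin> Z" "zmin < vpos b" by (auto simp: not_le)
  obtain l where l: "l \<in> C" "l \<in> Z" "constrained R l" "vpos l = zmin" by (rule zmin_attained)
  obtain h where h: "h \<in> C" "h \<in> Z" "constrained R h" "vpos h = zmax" by (rule zmax_attained)
  have "vpos d \<le> zmin" "zmax \<le> vpos b" using outside_Z_flank d b by fastforce+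
  then consider "vpos d < zmin" | "zmax < vpos b" | "vpos d = zmin" "vpos b = zmax" by linarith
  then show False
  proof cases
    case 1 then show False using no_pattern[OF d(1) l(1) b(1) d(2) l(3) b(2)] d b l by simp
  next
    case 2 then show False using no_pattern[OF d(1) h(1) b(1) d(2) h(3) b(2)] d b h by simp
  next
    case ends: 3
    then have "\<not> same_venn R d b" using vpos_cong d(4) by fastforce
    then obtain w where w: "w \<in> C" "constrained R w" "\<not> same_venn R w d" "\<not> same_venn R w b"
      using third_class[OF d(2) b(2)] by blast
    then have "vpos w \<noteq> zmin" "vpos w \<noteq> zmax"
      using vpos_eq_imp_same_venn[OF w(1) d(1)] vpos_eq_imp_same_venn[OF w(1) b(1)] ends by auto
    then consider "vpos w < zmin" | "zmin < vpos w" "vpos w < zmax" | "zmax < vpos w" by linarith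
    then show False
    proof cases
      case 1
      then have "w \<notin> Z" using zrange w(2) by fastforce
      then show False using no_pattern[OF w(1) l(1) b(1) w(2) l(3) b(2)] 1 b l by simp
    next
      case 2
      then have "w \<in> Z" using outside_Z_flank w(1,2) by fastforce
      then show False using no_pattern[OF d(1) w(1) b(1) d(2) w(2) b(2)] 2 ends d b by simp
    next
      case 3
      then have "w \<notin> Z" using zrange w(2) by fastforce
      then show False using no_pattern[OF d(1) h(1) w(1) d(2) h(3) w(2)] 3 ends d h by simp
    qed
  qed
qed

text \<open>Z is placed as one block: its constrained columns take
  the middle slot of their classes, the other constrained columns the slot before Z (class index
  at most zmin) or after Z.  When Z has unconstrained columns, Z goes to the front if all other
  constrained columns can follow it (Z_first), and to the end otherwise.\<close>
definition Z_first :: bool where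
  "Z_first \<longleftrightarrow> Z_free \<and> (\<forall>b\<in>C. constrained R b \<and> b \<notin> Z \<longrightarrow> zmax \<le> vpos b)"

definition key :: "'c \<Rightarrow> int" where
  "key c = (if constrained R c then
       (if c \<in> Z then 3 * int (vpos c) + 1
        else if \<not> Z_first \<and> vpos c \<le> zmin then 3 * int (vpos c) else 3 * int (vpos c) + 2)
     else if (c \<in> Z) = Z_first then -1 else 3 * int (length xs))"

definition key_lo :: int where "key_lo = (if Z_first then -1 else 3 * int zmin + 1)"
definition key_hi :: int where
  "key_hi = (if Z_free \<and> \<not> Z_first then 3 * int (length xs) else 3 * int zmax + 1)"

lemma key_bounds: "key_lo \<le> 3 * int zmin + 1" "3 * int zmax + 1 \<le> key_hi"
  using zmax_less unfolding key_lo_def key_hi_def by auto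

lemma key_Z_inside:
  assumes "c \<in> C" "c \<in> Z"
  shows "key_lo \<le> key c \<and> key c \<le> key_hi"
proof (cases "constrained R c")
  case True
  then have "key c = 3 * int (vpos c) + 1" using assms(2) unfolding key_def by simp
  then show ?thesis using zrange[OF assms(2) True] key_bounds by linarith
next
  case False
  then have "c \<in> Z \<inter> unconstrained_class C R" using assms by (simp add: unconstrained_class_iff)
  then have "Z_free" unfolding Z_free_def by blast
  show ?thesis
  proof (cases Z_first)
    case True
    then have "key c = -1" "key_lo = -1" using False assms(2) unfolding key_def key_lo_def by simp_all
    then show ?thesis using key_bounds(2) by linarith
  next
    case nf: False
    then have "key c = 3 * int (length xs)" "key_hi = 3 * int (length xs)"
      using False assms(2) \<open>Z_free\<close> unfolding key_def key_hi_def by simp_all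
    then show ?thesis using key_bounds(1) zmin_le_zmax zmax_less by linarith
  qed
qed

text \<open>Every other column gets a key outside it: constrained columns by outside_Z_flank (and by
  outside_Z_one_sided when Z is placed last), unconstrained ones at the end opposite to Z.\<close>
lemma key_outside_Z:
  assumes "c \<in> C" "c \<notin> Z"
  shows "key c < key_lo \<or> key_hi < key c"
proof (cases "constrained R c")
  case False
  show ?thesis
  proof (cases Z_first)
    case True
    then have "key c = 3 * int (length xs)" "key_hi = 3 * int zmax + 1"
      using False assms(2) unfolding key_def key_hi_def by simp_all
    then show ?thesis using zmax_less by linarith
  next
    case nf: False
    then have "key c = -1" "key_lo = 3 * int zmin + 1"
      using False assms(2) unfolding key_def key_lo_def by simp_all
    then show ?thesis by linarith
  qed
next
  case True
  consider (first) Z_first | (before) "\<not> Z_first" "vpos c \<le> zmin" | (after) "\<not> Z_first" "zmin < vpos c"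
    by linarith
  then show ?thesis
  proof cases
    case first
    then have "zmax \<le> vpos c" using assms True unfolding Z_first_def by blast
    moreover have "key c = 3 * int (vpos c) + 2" "key_hi = 3 * int zmax + 1"
      using first True assms(2) unfolding key_def key_hi_def by simp_all
    ultimately show ?thesis by linarith
  next
    case before
    then have "key c = 3 * int (vpos c)" "key_lo = 3 * int zmin + 1"
      using True assms(2) unfolding key_def key_lo_def by simp_all
    then show ?thesis using before by linarith
  next
    case after
    then have "zmax \<le> vpos c" using outside_Z_flank[OF assms(1) True assms(2)] by linarith
    have "\<not> Z_free"
    proof
      assume "Z_free"
      then show False
        using outside_Z_one_sided after assms True unfolding Z_first_def by fastforce
    qed
    then have "key c = 3 * int (vpos c) + 2" "key_hi = 3 * int zmax + 1"
      using after True assms(2) unfolding key_def key_hi_def by simp_all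
    then show ?thesis using \<open>zmax \<le> vpos c\<close> by linarith
  qed
qed

lemma c1p_if_Z_constrained: "has_c1p C (R \<union> {Z})"
proof (rule c1p_from_key[where phi = key and lo = key_lo and hi = key_hi])
  fix c assume "c \<in> C"
  then show "c \<in> Z \<longleftrightarrow> key_lo \<le> key c \<and> key c \<le> key_hi"
    using key_Z_inside key_outside_Z by fastforce
next
  fix c assume "c \<in> C" "constrained R c"
  then show "3 * int (vpos c) \<le> key c \<and> key c \<le> 3 * int (vpos c) + 2" unfolding key_def by simp
next
  fix c assume "c \<in> C" "\<not> constrained R c"
  then show "key c < 0 \<or> 3 * int (length xs) \<le> key c" unfolding key_def by simp
qed

end

theorem c1p_extension: "has_c1p C (R \<union> {Z})"
  using c1p_if_Z_unconstrained c1p_if_Z_constrained by blast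

end

theorem mainTheorem8:
  fixes C :: "'c set" and R :: "'c set set" and cs :: "'c list" and Z :: "'c set"
  assumes "finite C"
    and "\<forall>r\<in>R. r \<subseteq> C"
    and "R \<noteq> {}"
    and "has_c1p C R"
    and "overlap_connected R"
    and "c1p_ordering C R cs"
    and "Z \<subseteq> C"
    and "Z \<notin> R"
  shows "\<not> has_c1p C (R \<union> {Z}) \<longleftrightarrow>
           (config_101 R cs Z \<or>
            (config_010 R cs Z \<and> Z \<inter> unconstrained_class C R \<noteq> {}))"
proof -
  have cs: "c1p_order C R cs" using c1p_order_of_ordering assms(2,5,6) by blast
  have sufficiency: "has_c1p C (R \<union> {Z})"
    if "\<not> config_101 R cs Z" "config_010 R cs Z \<Longrightarrow> Z \<inter> unconstrained_class C R = {}"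
    using no_configuration.c1p_extension[of C R cs Z] cs that
    unfolding no_configuration_def no_configuration_axioms_def by blast
  show ?thesis using sufficiency configuration_obstructs[OF cs] by blast
qed

end
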